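(* Let $n\in\mathbb{N}$ and let $X_a,X_b,X_c\subset X$ be the subspaces defined below. Then for any constants $\beta\ge 0$ and $\gamma\ge0$, the spaces $X_a$, $X_b$, $X_c$ are pairwise orthogonal with respect to the inner product $$(\Delta u,\Delta v)_{L^2(0,1)}+\beta(\nabla u,\nabla v)_{L^2(0,1)}+\gamma(u,v)_{L^2(0,1)},\qquad u,v\in X.$$
   Context: Let $X=\{u\in H^2(0,1): u'(0)=u'(1)=0,\ \int_0^1u\,dx=0\}$, where $\Delta u=u''$ and $\nabla u=u'$. For $u\in X$ its extension $\tilde u$ is the $2$-periodic function with $\tilde u(x)=u(x)$ on $[0,1]$ and $\tilde u(x)=u(2-x)$ on $(1,2)$; it lies in $H^2_{per}(\mathbb{R})=\{v\in H^2_{loc}(\mathbb{R}): v(x+2)=v(x)\ \forall x,\ \int_0^2v\,dx=0\}$. On $W=H^2_{per}(\mathbb{R})$ define $(T_nv)(x)=-v(x+1/n)$ and $W_a=N(T_n-I)$, $W_b=N(T_n^{n-1}+\dots+T_n+I)$, $W_c=N(T_n^n+I)$. Define $X_\tau=\{u\in X:\tilde u\in W_\tau\}$ for $\tau\in\{a,b,c\}$. *)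

theory Defs
  imports "HOL-Analysis.Analysis"
begin

definition L2_on :: "(real \<Rightarrow> real) \<Rightarrow> real set \<Rightarrow> bool" where
  "L2_on f S \<longleftrightarrow> f measurable_on S \<and> (\<lambda>x. (f x)^2) integrable_on S"

text \<open>H^2(0,1), represented by the (absolutely continuous) representative u together with
  its first and second (weak) derivatives u1 = u' and u2 = u'':
  u2 is in L^2(0,1), u1 is an indefinite integral of u2 and u is an indefinite integral of u1.\<close>
definition H2_01 :: "(real \<Rightarrow> real) \<Rightarrow> (real \<Rightarrow> real) \<Rightarrow> (real \<Rightarrow> real) \<Rightarrow> bool" where
  "H2_01 u u1 u2 \<longleftrightarrow> L2_on u2 {0..1}
     \<and> (\<forall>x\<in>{0..1}. u1 x = u1 0 + integral {0..x} u2)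
     \<and> (\<forall>x\<in>{0..1}. u x = u 0 + integral {0..x} u1)"

definition in_X :: "(real \<Rightarrow> real) \<Rightarrow> (real \<Rightarrow> real) \<Rightarrow> (real \<Rightarrow> real) \<Rightarrow> bool" where
  "in_X u u1 u2 \<longleftrightarrow> H2_01 u u1 u2 \<and> u1 0 = 0 \<and> u1 1 = 0 \<and> integral {0..1} u = 0"

text \<open>Even 2-periodic extension: u on [0,1], u(2-x) on (1,2), extended 2-periodically.\<close>
definition ext :: "(real \<Rightarrow> real) \<Rightarrow> real \<Rightarrow> real" where
  "ext u x = (let y = x - 2 * of_int \<lfloor>x / 2\<rfloor> in if y \<le> 1 then u y else u (2 - y))"

definition T :: "nat \<Rightarrow> (real \<Rightarrow> real) \<Rightarrow> (real \<Rightarrow> real)" where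
  "T n v = (\<lambda>x. - v (x + 1 / real n))"

definition W_a :: "nat \<Rightarrow> (real \<Rightarrow> real) \<Rightarrow> bool" where
  "W_a n v \<longleftrightarrow> (\<forall>x. T n v x - v x = 0)"

definition W_b :: "nat \<Rightarrow> (real \<Rightarrow> real) \<Rightarrow> bool" where
  "W_b n v \<longleftrightarrow> (\<forall>x. (\<Sum>k<n. (T n ^^ k) v x) = 0)"

definition W_c :: "nat \<Rightarrow> (real \<Rightarrow> real) \<Rightarrow> bool" where
  "W_c n v \<longleftrightarrow> (\<forall>x. (T n ^^ n) v x + v x = 0)"

datatype sym = Sa | Sb | Sc

definition W_sym :: "sym \<Rightarrow> nat \<Rightarrow> (real \<Rightarrow> real) \<Rightarrow> bool" where
  "W_sym \<tau> n v = (case \<tau> of Sa \<Rightarrow> W_a n v | Sb \<Rightarrow> W_b n v | Sc \<Rightarrow> W_c n v)"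

definition in_X_sym :: "sym \<Rightarrow> nat \<Rightarrow> (real \<Rightarrow> real) \<Rightarrow> (real \<Rightarrow> real) \<Rightarrow> (real \<Rightarrow> real) \<Rightarrow> bool" where
  "in_X_sym \<tau> n u u1 u2 \<longleftrightarrow> in_X u u1 u2 \<and> W_sym \<tau> n (ext u)"

definition ip :: "real \<Rightarrow> real \<Rightarrow> (real \<Rightarrow> real) \<Rightarrow> (real \<Rightarrow> real) \<Rightarrow> (real \<Rightarrow> real)
                   \<Rightarrow> (real \<Rightarrow> real) \<Rightarrow> (real \<Rightarrow> real) \<Rightarrow> (real \<Rightarrow> real) \<Rightarrow> real" where
  "ip \<beta> \<gamma> u u1 u2 v v1 v2 =
     integral {0..1} (\<lambda>x. u2 x * v2 x) + \<beta> * integral {0..1} (\<lambda>x. u1 x * v1 x)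
     + \<gamma> * integral {0..1} (\<lambda>x. u x * v x)"

end

(* Through the even 2-periodic extension, the shift by 1, which is T_n^n up to the sign (-1)^n,
   acts on u in X as the reflection x |-> 1 - x of [0,1].  Hence u(1 - x) = e u(x) with
   e = (-1)^n on X_a and X_b and e = -(-1)^n on X_c; the symmetry passes to u' with sign -e and
   to u'' with sign e.  For u in X_c and v in X_a or X_b the products u v, u' v' and u'' v'' are
   therefore odd about 1/2, and their integrals over [0,1] vanish.
   For u in X_a and v in X_b we have u(t + j/n) = (-1)^j u(t) and sum_j (-1)^j v(t + j/n) = 0,
   and the same for u', v' and u'', v''.  Cutting [0,1] into n intervals of length 1/n and
   translating them to [0,1/n] turns the integral of u v into that of
   u(t) * sum_j (-1)^j v(t + j/n) = 0.
   The symmetries transfer to u' and u'' because they are linear relations between compositions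
   of u with maps x |-> s x + d: the corresponding combination of derivatives has vanishing
   integrals over all subintervals, and an integrable function whose integrals over all
   half-lines vanish is zero almost everywhere, by uniqueness of measures determined on
   half-lines. *)

theory Submission
  imports Defs
begin

section \<open>Functions whose integrals over all half-lines vanish\<close>

lemma AE_lborel_eq_0_if_set_integrals_Ioi_eq_0:
  fixes G :: "real \<Rightarrow> real"
  assumes G: "integrable lborel G" and Ioi: "\<And>a. (LINT x:{a<..}|lborel. G x) = 0"
  shows "AE x in lborel. G x = 0"
proof -
  define Gp Gm where "Gp x = max 0 (G x)" and "Gm x = max 0 (- G x)" for x
  have [measurable]: "G \<in> borel_measurable lborel" using G by auto
  have [measurable]: "Gp \<in> borel_measurable lborel" "Gm \<in> borel_measurable lborel"
    unfolding Gp_def Gm_def by simp_all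
  have int: "integrable lborel Gp" "integrable lborel Gm"
    unfolding Gp_def Gm_def by (intro integrable_max integrable_zero integrable_minus G)+
  have nn: "(\<integral>\<^sup>+x\<in>{a<..}. Gp x \<partial>lborel) = ennreal (LINT x:{a<..}|lborel. Gp x)"
    "(\<integral>\<^sup>+x\<in>{a<..}. Gm x \<partial>lborel) = ennreal (LINT x:{a<..}|lborel. Gm x)" for a
    by (intro nn_set_integral_eq_set_integral int; simp add: Gp_def Gm_def)+
  have "(LINT x:{a<..}|lborel. Gp x) - (LINT x:{a<..}|lborel. Gm x) = (LINT x:{a<..}|lborel. G x)" for a
  proof -
    have "set_integrable lborel {a<..} Gp" "set_integrable lborel {a<..} Gm"
      unfolding set_integrable_def by (rule integrable_mult_indicator, simp, rule int)+
    then have "(LINT x:{a<..}|lborel. Gp x) - (LINT x:{a<..}|lborel. Gm x)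
        = (LINT x:{a<..}|lborel. Gp x - Gm x)"
      by (rule set_integral_diff(2)[symmetric])
    also have "(\<lambda>x. Gp x - Gm x) = G"
      by (auto simp: Gp_def Gm_def max_def)
    finally show ?thesis .
  qed
  then have "(\<integral>\<^sup>+x\<in>{a<..}. Gp x \<partial>lborel) = (\<integral>\<^sup>+x\<in>{a<..}. Gm x \<partial>lborel)" for a
    using nn Ioi by simp
  moreover have "(\<integral>\<^sup>+x\<in>{a<..}. Gp x \<partial>lborel) < \<infinity>" for a
    using nn by simp
  ultimately have "density lborel Gp = density lborel Gm"
    by (intro measure_eqI_lessThan) (simp_all add: emeasure_density)
  then have "AE x in lborel. ennreal (Gp x) = ennreal (Gm x)"
    by (intro sigma_finite_measure.density_unique[OF sigma_finite_lborel]) simp_all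
  then show ?thesis
    by eventually_elim (auto simp: Gp_def Gm_def max_def split: if_splits)
qed

lemma AE_lebesgue_eq_0_if_set_integrals_Ioi_eq_0:
  fixes F :: "real \<Rightarrow> real"
  assumes F: "integrable lebesgue F" and Ioi: "\<And>a. (LINT x:{a<..}|lebesgue. F x) = 0"
  shows "AE x in lebesgue. F x = 0"
proof -
  have [measurable]: "F \<in> borel_measurable lebesgue" using F by auto
  obtain G where G [measurable]: "G \<in> borel_measurable lborel" and FG: "AE x in lborel. F x = G x"
    using completion_ex_borel_measurable_real[of F lborel] by auto
  have [measurable]: "G \<in> borel_measurable lebesgue"
    using G by (rule measurable_completion)
  have FG': "AE x in lebesgue. F x = G x"
    using FG by (rule AE_completion)
  have "integrable lebesgue G"
    using F _ FG' by (rule integrable_cong_AE_imp) measurable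
  then have "integrable lborel G"
    using integrable_completion G by blast
  moreover have "(LINT x:{a<..}|lborel. G x) = 0" for a
  proof -
    have "(LINT x:{a<..}|lborel. G x) = (LINT x:{a<..}|lebesgue. G x)"
      unfolding set_lebesgue_integral_def by (rule integral_completion[symmetric]) simp
    also have "\<dots> = (LINT x:{a<..}|lebesgue. F x)"
      using FG' by (intro set_lebesgue_integral_cong_AE) auto
    finally show ?thesis using Ioi by simp
  qed
  ultimately have "AE x in lborel. G x = 0"
    by (rule AE_lborel_eq_0_if_set_integrals_Ioi_eq_0)
  then have "AE x in lborel. F x = 0"
    using FG by eventually_elim simp
  then show ?thesis
    by (rule AE_completion)
qed

section \<open>Indefinite integrals\<close>

definition indefinite_integral_on :: "(real \<Rightarrow> real) \<Rightarrow> (real \<Rightarrow> real) \<Rightarrow> real \<Rightarrow> real \<Rightarrow> bool" where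
  "indefinite_integral_on W f p q \<longleftrightarrow>
     (\<forall>a b. p \<le> a \<longrightarrow> a \<le> b \<longrightarrow> b \<le> q \<longrightarrow> (f has_integral W b - W a) {a..b})"

lemma indefinite_integral_onI:
  assumes f: "f integrable_on {p..q}"
    and W: "\<And>x. x \<in> {p..q} \<Longrightarrow> W x = W p + integral {p..x} f"
  shows "indefinite_integral_on W f p q"
  unfolding indefinite_integral_on_def
proof (intro allI impI)
  fix a b assume ab: "p \<le> a" "a \<le> b" "b \<le> q"
  have f_ab: "f integrable_on {a..b}"
    using ab by (intro integrable_on_subinterval[OF f]) auto
  have "integral {p..a} f + integral {a..b} f = integral {p..b} f"
    using ab by (intro Henstock_Kurzweil_Integration.integral_combine integrable_on_subinterval[OF f]) auto
  moreover have "W a = W p + integral {p..a} f" "W b = W p + integral {p..b} f"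
    using ab by (auto intro!: W)
  ultimately have "W b - W a = integral {a..b} f"
    by linarith
  then show "(f has_integral W b - W a) {a..b}"
    using integrable_integral[OF f_ab] by simp
qed

lemma indefinite_integral_on_comp_affine:
  assumes W: "indefinite_integral_on W f lo hi" and s: "s \<noteq> 0"
    and range: "\<And>x. x \<in> {p..q} \<Longrightarrow> s * x + d \<in> {lo..hi}"
  shows "indefinite_integral_on (\<lambda>x. W (s * x + d)) (\<lambda>x. s * f (s * x + d)) p q"
  unfolding indefinite_integral_on_def
proof (intro allI impI)
  fix a b assume ab: "p \<le> a" "a \<le> b" "b \<le> q"
  define \<sigma> where "\<sigma> x = s * x + d" for x
  define I where "I = (if 0 < s then W (\<sigma> b) - W (\<sigma> a) else W (\<sigma> a) - W (\<sigma> b))"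
  define A B where "A = min (\<sigma> a) (\<sigma> b)" and "B = max (\<sigma> a) (\<sigma> b)"
  have \<sigma>_range: "\<sigma> a \<in> {lo..hi}" "\<sigma> b \<in> {lo..hi}"
    using ab range unfolding \<sigma>_def by auto
  have "\<sigma> ` {a..b} = {A..B} \<and> (f has_integral I) {A..B}"
  proof (cases "0 < s")
    case True
    then have "\<sigma> ` {a..b} = {\<sigma> a..\<sigma> b}" "\<sigma> a \<le> \<sigma> b"
      using ab unfolding \<sigma>_def by (simp_all add: image_affinity_atLeastAtMost)
    then show ?thesis
      using W \<sigma>_range True unfolding indefinite_integral_on_def I_def A_def B_def by simp
  next
    case False
    then have "\<sigma> ` {a..b} = {\<sigma> b..\<sigma> a}" "\<sigma> b \<le> \<sigma> a"
      using ab s unfolding \<sigma>_def by (simp_all add: image_affinity_atLeastAtMost mult_left_mono_neg)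
    then show ?thesis
      using W \<sigma>_range False unfolding indefinite_integral_on_def I_def A_def B_def by simp
  qed
  then have img: "\<sigma> ` {a..b} = {A..B}" and I: "(f has_integral I) (cbox A B)"
    by simp_all
  have "(\<lambda>x. (1 / s) *\<^sub>R x + - ((1 / s) *\<^sub>R d)) ` {A..B} = {a..b}"
    unfolding img[symmetric] image_image \<sigma>_def using s by (simp add: field_simps)
  with has_integral_affinity[OF I s, of d]
  have "((\<lambda>x. f (s * x + d)) has_integral I / \<bar>s\<bar>) {a..b}"
    by simp
  then have "((\<lambda>x. s * f (s * x + d)) has_integral s * (I / \<bar>s\<bar>)) {a..b}"
    by (rule has_integral_mult_right)
  moreover have "s * (I / \<bar>s\<bar>) = W (\<sigma> b) - W (\<sigma> a)"
    using s unfolding I_def by (auto simp: abs_if)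
  ultimately show "((\<lambda>x. s * f (s * x + d)) has_integral W (s * b + d) - W (s * a + d)) {a..b}"
    unfolding \<sigma>_def by simp
qed

lemma indefinite_integral_on_sum:
  assumes "finite J" and "\<And>j. j \<in> J \<Longrightarrow> indefinite_integral_on (W j) (f j) p q"
  shows "indefinite_integral_on (\<lambda>x. \<Sum>j\<in>J. c j * W j x) (\<lambda>x. \<Sum>j\<in>J. c j * f j x) p q"
  unfolding indefinite_integral_on_def
proof (intro allI impI)
  fix a b assume ab: "p \<le> a" "a \<le> b" "b \<le> q"
  have "((\<lambda>x. \<Sum>j\<in>J. c j * f j x) has_integral (\<Sum>j\<in>J. c j * (W j b - W j a))) {a..b}"
    using assms ab unfolding indefinite_integral_on_def
    by (intro has_integral_sum has_integral_mult_right) auto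
  then show "((\<lambda>x. \<Sum>j\<in>J. c j * f j x) has_integral
      (\<Sum>j\<in>J. c j * W j b) - (\<Sum>j\<in>J. c j * W j a)) {a..b}"
    by (simp add: right_diff_distrib sum_subtractf)
qed

lemma indefinite_integral_on_affine_combination:
  assumes W: "indefinite_integral_on W f lo hi" and J: "finite J" and s: "\<And>j. j \<in> J \<Longrightarrow> s j \<noteq> 0"
    and range: "\<And>j x. j \<in> J \<Longrightarrow> x \<in> {p..q} \<Longrightarrow> s j * x + d j \<in> {lo..hi}"
  shows "indefinite_integral_on (\<lambda>x. \<Sum>j\<in>J. c j * W (s j * x + d j))
           (\<lambda>x. \<Sum>j\<in>J. c j * s j * f (s j * x + d j)) p q"
  using indefinite_integral_on_sum[OF J, of "\<lambda>j x. W (s j * x + d j)" "\<lambda>j x. s j * f (s j * x + d j)"]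
    indefinite_integral_on_comp_affine[OF W s range]
  by (simp add: mult.assoc)

lemma indefinite_integral_on_zero_imp_zero:
  assumes W: "indefinite_integral_on W f p q" and W0: "\<And>x. x \<in> {p..q} \<Longrightarrow> W x = 0"
    and f: "continuous_on {p..q} f" and "p < q" and x: "x \<in> {p..q}"
  shows "f x = 0"
proof -
  have zero: "integral {p..y} f = 0" if y: "y \<in> {p..q}" for y
  proof -
    have "(f has_integral W y - W p) {p..y}"
      using W y unfolding indefinite_integral_on_def by simp
    then show ?thesis
      using W0[of p] W0[of y] y \<open>p < q\<close> by (simp add: integral_unique)
  qed
  have "((\<lambda>y. integral {p..y} f) has_real_derivative 0) (at x within {p..q})"
    by (rule has_field_derivative_transform_within[OF DERIV_const zero_less_one x]) (simp add: zero)
  moreover have "((\<lambda>y. integral {p..y} f) has_real_derivative f x) (at x within {p..q})"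
    by (rule integral_has_real_derivative[OF f x])
  ultimately show "f x = 0"
    using vector_derivative_unique_within_closed_interval[of p q x "\<lambda>y. integral {p..y} f" "f x" 0]
      \<open>p < q\<close> x
    by (simp add: has_real_derivative_iff_has_vector_derivative)
qed

lemma indefinite_integral_on_zero_imp_ae_zero:
  assumes W: "indefinite_integral_on W f p q" and W0: "\<And>x. x \<in> {p..q} \<Longrightarrow> W x = 0"
    and f: "f absolutely_integrable_on {p..q}"
  shows "\<exists>N. negligible N \<and> (\<forall>x\<in>{p..q} - N. f x = 0)"
proof -
  define F where "F x = indicator {p..q} x * f x" for x
  have "integrable lebesgue F"
    using f unfolding set_integrable_def F_def by simp
  moreover have "(LINT x:{a<..}|lebesgue. F x) = 0" for a
  proof -
    have "set_integrable lebesgue ({a<..} \<inter> {p..q}) f"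
      by (rule set_integrable_subset[OF f]) auto
    then have "(LINT x:{a<..}|lebesgue. F x) = integral ({a<..} \<inter> {p..q}) f"
      unfolding F_def set_lebesgue_integral_def[of _ "{a<..}"]
      by (simp add: set_lebesgue_integral_eq_integral(2)[symmetric] set_lebesgue_integral_def
          indicator_inter_arith ac_simps)
    also have "\<dots> = 0"
    proof (cases "max a p \<le> q")
      case True
      define c where "c = max a p"
      have "integral ({a<..} \<inter> {p..q}) f = integral {c..q} f"
        by (rule integral_spike_set; rule negligible_subset[of "{c}"]) (auto simp: c_def)
      also have "\<dots> = W q - W c"
        using W True unfolding indefinite_integral_on_def c_def
        by (intro integral_unique) simp
      also have "\<dots> = 0"
        using W0[of c] W0[of q] True unfolding c_def by simp
      finally show ?thesis .
    next
      case False
      then have "{a<..} \<inter> {p..q} = {}"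
        by auto
      then show ?thesis
        by simp
    qed
    finally show ?thesis .
  qed
  ultimately have "AE x in lebesgue. F x = 0"
    by (rule AE_lebesgue_eq_0_if_set_integrals_Ioi_eq_0)
  then have "AE x in lebesgue. x \<in> {p..q} \<longrightarrow> f x = 0"
    by eventually_elim (auto simp: F_def split: split_indicator)
  then have "\<exists>N. negligible N \<and> {x. \<not> (x \<in> {p..q} \<longrightarrow> f x = 0)} \<subseteq> N"
    by (simp only: eventually_ae_filter_negligible)
  then show ?thesis
    by blast
qed

lemma absolutely_integrable_on_comp_affine:
  fixes f :: "real \<Rightarrow> real"
  assumes f: "f absolutely_integrable_on {lo..hi}" and s: "s \<noteq> 0"
    and range: "\<And>x. x \<in> {p..q} \<Longrightarrow> s * x + d \<in> {lo..hi}"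
  shows "(\<lambda>x. f (s * x + d)) absolutely_integrable_on {p..q}"
proof -
  have "(\<lambda>x. s * x + d) ` {p..q} \<in> sets lebesgue"
    by (simp add: image_affinity_atLeastAtMost)
  moreover have "(\<lambda>x. s * x + d) ` {p..q} \<subseteq> {lo..hi}"
    using range by auto
  ultimately have "f absolutely_integrable_on (\<lambda>x. s * x + d) ` {p..q}"
    using f set_integrable_subset by blast
  then have "(\<lambda>x. \<bar>s\<bar> *\<^sub>R f (s * x + d)) absolutely_integrable_on {p..q}"
    by (subst (asm) absolutely_integrable_change_of_variables_real)
      (auto intro!: derivative_eq_intros inj_onI simp: s)
  then have "(\<lambda>x. (1 / \<bar>s\<bar>) *\<^sub>R (\<bar>s\<bar> *\<^sub>R f (s * x + d))) absolutely_integrable_on {p..q}"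
    by (rule absolutely_integrable_scaleR_left)
  then show ?thesis
    using s by simp
qed

section \<open>Linear relations between reflected and shifted copies of an H^2 function\<close>

lemma L2_on_imp_absolutely_integrable:
  fixes f :: "real \<Rightarrow> real"
  assumes f: "L2_on f S" and S: "S \<in> lmeasurable"
  shows "f absolutely_integrable_on S"
proof (rule measurable_bounded_by_integrable_imp_absolutely_integrable)
  show S_sets: "S \<in> sets lebesgue"
    using S by blast
  then show "f \<in> borel_measurable (lebesgue_on S)"
    using f by (simp add: L2_on_def flip: measurable_on_iff_borel_measurable)
  show "(\<lambda>x. 1 + (f x)\<^sup>2) integrable_on S"
    using f S by (intro integrable_add integrable_on_const) (simp_all add: L2_on_def)
  show "norm (f x) \<le> 1 + (f x)\<^sup>2" for x
  proof -
    have "0 \<le> (\<bar>f x\<bar> - 1)\<^sup>2"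
      by simp
    then show ?thesis
      unfolding power2_diff by simp
  qed
qed

lemma H2_01_indefinite_integrals:
  assumes "H2_01 u u1 u2"
  shows "u2 absolutely_integrable_on {0..1}" and "continuous_on {0..1} u1"
    and "indefinite_integral_on u1 u2 0 1" and "indefinite_integral_on u u1 0 1"
proof -
  have u2: "L2_on u2 {0..1}"
    and u1: "\<And>x. x \<in> {0..1} \<Longrightarrow> u1 x = u1 0 + integral {0..x} u2"
    and u: "\<And>x. x \<in> {0..1} \<Longrightarrow> u x = u 0 + integral {0..x} u1"
    using assms unfolding H2_01_def by blast+
  show "u2 absolutely_integrable_on {0..1}"
    using u2 by (rule L2_on_imp_absolutely_integrable) simp
  then have u2_int: "u2 integrable_on {0..1}"
    by (simp add: absolutely_integrable_on_def)
  show "indefinite_integral_on u1 u2 0 1"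
    using u2_int u1 by (rule indefinite_integral_onI)
  have "continuous_on {0..1} (\<lambda>x. u1 0 + integral {0..x} u2)"
    using u2_int by (intro continuous_intros indefinite_integral_continuous_1)
  then show u1_cont: "continuous_on {0..1} u1"
    by (rule continuous_on_eq) (metis u1)
  show "indefinite_integral_on u u1 0 1"
    using integrable_continuous_interval[OF u1_cont] u by (rule indefinite_integral_onI)
qed

lemma H2_01_affine_relation:
  fixes c s d :: "'j \<Rightarrow> real"
  assumes H: "H2_01 u u1 u2" and J: "finite J" and s: "\<forall>j\<in>J. s j \<noteq> 0"
    and range: "\<forall>j\<in>J. \<forall>x\<in>{p..q}. s j * x + d j \<in> {0..1}" and "p < q"
    and rel: "\<forall>x\<in>{p..q}. (\<Sum>j\<in>J. c j * u (s j * x + d j)) = 0"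
  shows "\<And>x. x \<in> {p..q} \<Longrightarrow> (\<Sum>j\<in>J. c j * s j * u1 (s j * x + d j)) = 0"
    and "\<exists>N. negligible N \<and> (\<forall>x\<in>{p..q} - N. (\<Sum>j\<in>J. c j * (s j)\<^sup>2 * u2 (s j * x + d j)) = 0)"
proof -
  note u = H2_01_indefinite_integrals[OF H]
  have cont: "continuous_on {p..q} (\<lambda>x. \<Sum>j\<in>J. c j * s j * u1 (s j * x + d j))"
  proof (intro continuous_on_sum continuous_on_mult continuous_on_const)
    fix j assume "j \<in> J"
    then show "continuous_on {p..q} (\<lambda>x. u1 (s j * x + d j))"
      using range by (intro continuous_on_compose2[OF u(2)] continuous_intros) auto
  qed
  have I1: "indefinite_integral_on (\<lambda>x. \<Sum>j\<in>J. c j * u (s j * x + d j))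
      (\<lambda>x. \<Sum>j\<in>J. c j * s j * u1 (s j * x + d j)) p q"
    using s range by (intro indefinite_integral_on_affine_combination[OF u(4) J]) auto
  show rel1: "\<And>x. x \<in> {p..q} \<Longrightarrow> (\<Sum>j\<in>J. c j * s j * u1 (s j * x + d j)) = 0"
    using rel by (intro indefinite_integral_on_zero_imp_zero[OF I1 _ cont \<open>p < q\<close>]) auto
  have abs: "(\<lambda>x. \<Sum>j\<in>J. c j * (s j)\<^sup>2 * u2 (s j * x + d j)) absolutely_integrable_on {p..q}"
  proof (intro absolutely_integrable_sum J)
    fix j assume "j \<in> J"
    then have "(\<lambda>x. u2 (s j * x + d j)) absolutely_integrable_on {p..q}"
      using s range by (intro absolutely_integrable_on_comp_affine[OF u(1)]) auto
    from absolutely_integrable_scaleR_left[OF this, of "c j * (s j)\<^sup>2"]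
    show "(\<lambda>x. c j * (s j)\<^sup>2 * u2 (s j * x + d j)) absolutely_integrable_on {p..q}"
      by simp
  qed
  have I2: "indefinite_integral_on (\<lambda>x. \<Sum>j\<in>J. c j * s j * u1 (s j * x + d j))
      (\<lambda>x. \<Sum>j\<in>J. c j * (s j)\<^sup>2 * u2 (s j * x + d j)) p q"
    using s range indefinite_integral_on_affine_combination[OF u(3) J,
      where s = s and d = d and p = p and q = q and c = "\<lambda>j. c j * s j"]
    by (simp add: power2_eq_square mult.assoc)
  show "\<exists>N. negligible N \<and> (\<forall>x\<in>{p..q} - N. (\<Sum>j\<in>J. c j * (s j)\<^sup>2 * u2 (s j * x + d j)) = 0)"
    by (rule indefinite_integral_on_zero_imp_ae_zero[OF I2 rel1 abs])
qed

lemma H2_01_two_term_relation: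
  assumes H: "H2_01 u u1 u2" and s: "s \<noteq> 0" and "p < q"
    and range: "\<forall>x\<in>{p..q}. x \<in> {0..1} \<and> s * x + d \<in> {0..1}"
    and rel: "\<forall>x\<in>{p..q}. u (s * x + d) = e * u x"
  shows "\<And>x. x \<in> {p..q} \<Longrightarrow> s * u1 (s * x + d) = e * u1 x"
    and "\<exists>N. negligible N \<and> (\<forall>x\<in>{p..q} - N. s\<^sup>2 * u2 (s * x + d) = e * u2 x)"
proof -
  define c' s' d' :: "bool \<Rightarrow> real"
    where "c' b = (if b then 1 else - e)" and "s' b = (if b then s else 1)" and "d' b = (if b then d else 0)"
    for b
  have rel': "\<forall>x\<in>{p..q}. (\<Sum>b\<in>UNIV. c' b * u (s' b * x + d' b)) = 0"
    using rel by (simp add: UNIV_bool c'_def s'_def d'_def)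
  have s': "\<forall>b\<in>UNIV. s' b \<noteq> 0"
    using s by (simp add: s'_def)
  have range': "\<forall>b\<in>UNIV. \<forall>x\<in>{p..q}. s' b * x + d' b \<in> {0..1}"
    using range by (simp add: s'_def d'_def)
  note R = H2_01_affine_relation[OF H finite_class.finite_UNIV s' range' \<open>p < q\<close> rel']
  show "\<And>x. x \<in> {p..q} \<Longrightarrow> s * u1 (s * x + d) = e * u1 x"
    using R(1) by (simp add: UNIV_bool c'_def s'_def d'_def)
  show "\<exists>N. negligible N \<and> (\<forall>x\<in>{p..q} - N. s\<^sup>2 * u2 (s * x + d) = e * u2 x)"
    using R(2) by (simp add: UNIV_bool c'_def s'_def d'_def)
qed

lemma H2_01_reflection:
  assumes H: "H2_01 u u1 u2" and u: "\<forall>x\<in>{0..1}. u (1 - x) = e * u x"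
  shows "\<And>x. x \<in> {0..1} \<Longrightarrow> u1 (1 - x) = - e * u1 x"
    and "\<exists>N. negligible N \<and> (\<forall>x\<in>{0..1} - N. u2 (1 - x) = e * u2 x)"
proof -
  have range: "\<forall>x\<in>{0..1::real}. x \<in> {0..1} \<and> - 1 * x + 1 \<in> {0..1}"
    by auto
  have rel: "\<forall>x\<in>{0..1}. u (- 1 * x + 1) = e * u x"
    using u by simp
  have s: "- 1 \<noteq> (0::real)"
    by simp
  note R = H2_01_two_term_relation[where s = "- 1" and p = 0 and q = 1 and d = 1 and e = e,
      OF H s zero_less_one range rel]
  show "\<And>x. x \<in> {0..1} \<Longrightarrow> u1 (1 - x) = - e * u1 x"
    using R(1) by (simp add: minus_equation_iff)
  show "\<exists>N. negligible N \<and> (\<forall>x\<in>{0..1} - N. u2 (1 - x) = e * u2 x)"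
    using R(2) by simp
qed

lemma shift_in_unit_interval:
  assumes "k < n" and "t \<in> {0..1 / real n}"
  shows "t + real k / real n \<in> {0..1}"
proof -
  have "t + real k / real n \<le> real (Suc k) / real n"
    using assms by (simp add: add_divide_distrib)
  also have "\<dots> \<le> 1"
    using assms by simp
  finally show ?thesis
    using assms by simp
qed

lemma H2_01_shift:
  assumes H: "H2_01 u u1 u2" and n: "n \<ge> 1"
    and u: "\<forall>t\<in>{0..1 / real n}. \<forall>j<n. u (t + real j / real n) = (-1) ^ j * u t"
  shows "\<And>t j. t \<in> {0..1 / real n} \<Longrightarrow> j < n \<Longrightarrow> u1 (t + real j / real n) = (-1) ^ j * u1 t"
    and "\<exists>N. negligible N \<and>
           (\<forall>t\<in>{0..1 / real n} - N. \<forall>j<n. u2 (t + real j / real n) = (-1) ^ j * u2 t)"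
proof -
  have pos: "0 < 1 / real n"
    using n by simp
  have R: "(\<forall>t\<in>{0..1 / real n}. u1 (t + real j / real n) = (-1) ^ j * u1 t) \<and>
      (\<exists>N. negligible N \<and> (\<forall>t\<in>{0..1 / real n} - N. u2 (t + real j / real n) = (-1) ^ j * u2 t))"
    if j: "j < n" for j
  proof -
    have range: "\<forall>t\<in>{0..1 / real n}. t \<in> {0..1} \<and> 1 * t + real j / real n \<in> {0..1}"
      using shift_in_unit_interval[OF j] shift_in_unit_interval[of 0 n] n by auto
    have rel: "\<forall>t\<in>{0..1 / real n}. u (1 * t + real j / real n) = (-1) ^ j * u t"
      using u j by simp
    from H2_01_two_term_relation[where s = 1 and p = 0 and q = "1 / real n" and d = "real j / real n"
        and e = "(-1) ^ j", OF H one_neq_zero pos range rel]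
    show ?thesis
      by simp
  qed
  then show "\<And>t j. t \<in> {0..1 / real n} \<Longrightarrow> j < n \<Longrightarrow> u1 (t + real j / real n) = (-1) ^ j * u1 t"
    by blast
  from R obtain N where N: "\<And>j. j < n \<Longrightarrow> negligible (N j)"
    and N_eq: "\<And>j t. j < n \<Longrightarrow> t \<in> {0..1 / real n} - N j \<Longrightarrow> u2 (t + real j / real n) = (-1) ^ j * u2 t"
    by metis
  show "\<exists>N. negligible N \<and>
      (\<forall>t\<in>{0..1 / real n} - N. \<forall>j<n. u2 (t + real j / real n) = (-1) ^ j * u2 t)"
    by (rule exI[of _ "\<Union>j<n. N j"]) (auto intro: N N_eq)
qed

lemma H2_01_alternating_sum:
  assumes H: "H2_01 v v1 v2" and n: "n \<ge> 1"
    and v: "\<forall>t\<in>{0..1 / real n}. (\<Sum>j<n. (-1) ^ j * v (t + real j / real n)) = 0"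
  shows "\<And>t. t \<in> {0..1 / real n} \<Longrightarrow> (\<Sum>j<n. (-1) ^ j * v1 (t + real j / real n)) = 0"
    and "\<exists>N. negligible N \<and> (\<forall>t\<in>{0..1 / real n} - N. (\<Sum>j<n. (-1) ^ j * v2 (t + real j / real n)) = 0)"
proof -
  have pos: "0 < 1 / real n"
    using n by simp
  have range: "\<forall>j\<in>{..<n}. \<forall>t\<in>{0..1 / real n}. 1 * t + real j / real n \<in> {0..1}"
    using shift_in_unit_interval by simp
  have rel: "\<forall>t\<in>{0..1 / real n}. (\<Sum>j<n. (-1) ^ j * v (1 * t + real j / real n)) = 0"
    using v by simp
  have one: "\<forall>j\<in>{..<n}. (1::real) \<noteq> 0"
    by simp
  note R = H2_01_affine_relation[where J = "{..<n}" and s = "\<lambda>_. 1" and d = "\<lambda>j. real j / real n"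
      and c = "\<lambda>j. (-1) ^ j" and p = 0 and q = "1 / real n", OF H finite_lessThan one range pos rel]
  show "\<And>t. t \<in> {0..1 / real n} \<Longrightarrow> (\<Sum>j<n. (-1) ^ j * v1 (t + real j / real n)) = 0"
    using R(1) by simp
  show "\<exists>N. negligible N \<and> (\<forall>t\<in>{0..1 / real n} - N. (\<Sum>j<n. (-1) ^ j * v2 (t + real j / real n)) = 0)"
    using R(2) by simp
qed

section \<open>Orthogonality from symmetries\<close>

lemma integral_reflect_interval:
  "integral {a..b} (\<lambda>x. h (a + b - x)) = integral {a..b::real} h"
proof -
  have "integral {a..b} (\<lambda>x. h (a + b - x)) = integral {a..b} ((\<lambda>y. h (- y)) \<circ> (+) (- (a + b)))"
    by (simp add: o_def add.commute)
  also have "\<dots> = integral {-b..-a} (\<lambda>y. h (- y))"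
    by (simp add: integral_shift_Icc_real)
  also have "\<dots> = integral {a..b} h"
    by (rule Henstock_Kurzweil_Integration.integral_reflect_real)
  finally show ?thesis .
qed

lemma integral_product_eq_0_if_opposite_parity:
  fixes f g :: "real \<Rightarrow> real"
  assumes N: "negligible N" and e: "e * e = 1"
    and f: "\<And>x. x \<in> {0..1} - N \<Longrightarrow> f (1 - x) = e * f x"
    and g: "\<And>x. x \<in> {0..1} - N \<Longrightarrow> g (1 - x) = - e * g x"
  shows "integral {0..1} (\<lambda>x. f x * g x) = 0"
proof -
  have "integral {0..1} (\<lambda>x. f x * g x) = integral {0..1} (\<lambda>x. f (1 - x) * g (1 - x))"
    using integral_reflect_interval[of 0 1 "\<lambda>x. f x * g x"] by simp
  also have "\<dots> = integral {0..1} (\<lambda>x. - (f x * g x))"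
  proof (rule integral_spike[OF N])
    fix x assume "x \<in> {0..1} - N"
    then have "f (1 - x) * g (1 - x) = - ((e * e) * (f x * g x))"
      using f g by (simp add: algebra_simps)
    then show "- (f x * g x) = f (1 - x) * g (1 - x)"
      using e by simp
  qed
  finally show ?thesis
    by simp
qed

lemma has_integral_sum_shifts:
  fixes h :: "real \<Rightarrow> real"
  assumes n: "n \<ge> 1" and h: "h integrable_on {0..1}"
  shows "((\<lambda>t. \<Sum>j<n. h (t + real j / real n)) has_integral integral {0..1} h) {0..1 / real n}"
proof -
  have "((\<lambda>t. \<Sum>j<k. h (t + real j / real n)) has_integral integral {0..real k / real n} h) {0..1 / real n}"
    if "k \<le> n" for k
    using that
  proof (induction k)
    case (Suc k)
    define a b where "a = real k / real n" and "b = real (Suc k) / real n"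
    have ab: "0 \<le> a" "a \<le> b" "b = 1 / real n + a"
      using n by (auto simp: a_def b_def divide_right_mono add_divide_distrib)
    have "b \<le> 1"
      using Suc.prems unfolding b_def by (simp add: divide_le_eq_1)
    have "h integrable_on {a..b}"
      using ab \<open>b \<le> 1\<close> by (intro integrable_on_subinterval[OF h]) auto
    then have "(h has_integral integral {a..b} h) {0 + a..1 / real n + a}"
      using ab by (simp add: integrable_integral)
    then have "((h \<circ> (+) a) has_integral integral {a..b} h) {0..1 / real n}"
      by (simp only: has_integral_shift_Icc_real)
    then have "((\<lambda>t. h (t + a)) has_integral integral {a..b} h) {0..1 / real n}"
      by (simp add: o_def add.commute)
    from has_integral_add[OF Suc.IH[OF Suc_leD[OF Suc.prems]] this]
    have "((\<lambda>t. \<Sum>j<Suc k. h (t + real j / real n)) has_integral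
        integral {0..a} h + integral {a..b} h) {0..1 / real n}"
      by (simp add: a_def)
    moreover have "integral {0..a} h + integral {a..b} h = integral {0..b} h"
      using ab \<open>b \<le> 1\<close>
      by (intro Henstock_Kurzweil_Integration.integral_combine integrable_on_subinterval[OF h]) auto
    ultimately show ?case
      by (simp add: b_def)
  qed simp
  from this[of n] show ?thesis
    using n by simp
qed

lemma integral_eq_0_if_shift_sums_vanish:
  fixes h :: "real \<Rightarrow> real"
  assumes n: "n \<ge> 1" and N: "negligible N"
    and sums: "\<And>t. t \<in> {0..1 / real n} - N \<Longrightarrow> (\<Sum>j<n. h (t + real j / real n)) = 0"
  shows "integral {0..1} h = 0"
proof (cases "h integrable_on {0..1}")
  case True
  have "((\<lambda>t. 0) has_integral integral {0..1} h) {0..1 / real n}"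
    by (rule has_integral_spike[OF N _ has_integral_sum_shifts[OF n True]]) (simp add: sums)
  then show ?thesis
    by simp
qed (rule not_integrable_integral) \<comment> \<open>the integral of a non-integrable function is 0\<close>

lemma integral_product_eq_0_if_antiperiodic_and_alternating:
  fixes f g :: "real \<Rightarrow> real"
  assumes n: "n \<ge> 1" and N: "negligible N"
    and f: "\<And>t j. t \<in> {0..1 / real n} - N \<Longrightarrow> j < n \<Longrightarrow> f (t + real j / real n) = (-1) ^ j * f t"
    and g: "\<And>t. t \<in> {0..1 / real n} - N \<Longrightarrow> (\<Sum>j<n. (-1) ^ j * g (t + real j / real n)) = 0"
  shows "integral {0..1} (\<lambda>x. f x * g x) = 0"
proof (rule integral_eq_0_if_shift_sums_vanish[OF n N])
  fix t assume t: "t \<in> {0..1 / real n} - N"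
  have "(\<Sum>j<n. f (t + real j / real n) * g (t + real j / real n))
      = f t * (\<Sum>j<n. (-1) ^ j * g (t + real j / real n))"
    unfolding sum_distrib_left by (intro sum.cong refl) (simp add: f[OF t])
  then show "(\<Sum>j<n. f (t + real j / real n) * g (t + real j / real n)) = 0"
    using g[OF t] by simp
qed

lemma ip_eq_0_if_opposite_reflection_parity:
  assumes "H2_01 u u1 u2" and "H2_01 v v1 v2" and e: "e * e = 1"
    and "\<forall>x\<in>{0..1}. u (1 - x) = e * u x" and "\<forall>x\<in>{0..1}. v (1 - x) = - e * v x"
  shows "ip \<beta> \<gamma> u u1 u2 v v1 v2 = 0"
proof -
  note U = H2_01_reflection[OF assms(1,4)] and V = H2_01_reflection[OF assms(2,5)]
  obtain Nu Nv where "negligible Nu" "\<forall>x\<in>{0..1} - Nu. u2 (1 - x) = e * u2 x"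
    and "negligible Nv" "\<forall>x\<in>{0..1} - Nv. v2 (1 - x) = - e * v2 x"
    using U(2) V(2) by blast
  then have "integral {0..1} (\<lambda>x. u2 x * v2 x) = 0"
    by (intro integral_product_eq_0_if_opposite_parity[of "Nu \<union> Nv" e]) (auto simp: e)
  moreover have "integral {0..1} (\<lambda>x. u1 x * v1 x) = 0"
    using U(1) V(1) by (intro integral_product_eq_0_if_opposite_parity[of "{}" "- e"]) (auto simp: e)
  moreover have "integral {0..1} (\<lambda>x. u x * v x) = 0"
    using assms(4,5) by (intro integral_product_eq_0_if_opposite_parity[of "{}" e]) (auto simp: e)
  ultimately show ?thesis
    by (simp add: ip_def)
qed

lemma ip_eq_0_if_antiperiodic_and_alternating:
  assumes n: "n \<ge> 1" and "H2_01 u u1 u2" and "H2_01 v v1 v2"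
    and "\<forall>t\<in>{0..1 / real n}. \<forall>j<n. u (t + real j / real n) = (-1) ^ j * u t"
    and "\<forall>t\<in>{0..1 / real n}. (\<Sum>j<n. (-1) ^ j * v (t + real j / real n)) = 0"
  shows "ip \<beta> \<gamma> u u1 u2 v v1 v2 = 0"
proof -
  note U = H2_01_shift[OF assms(2) n assms(4)] and V = H2_01_alternating_sum[OF assms(3) n assms(5)]
  obtain Nu Nv where "negligible Nu"
      "\<forall>t\<in>{0..1 / real n} - Nu. \<forall>j<n. u2 (t + real j / real n) = (-1) ^ j * u2 t"
    and "negligible Nv" "\<forall>t\<in>{0..1 / real n} - Nv. (\<Sum>j<n. (-1) ^ j * v2 (t + real j / real n)) = 0"
    using U(2) V(2) by blast
  then have "integral {0..1} (\<lambda>x. u2 x * v2 x) = 0"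
    by (intro integral_product_eq_0_if_antiperiodic_and_alternating[OF n, of "Nu \<union> Nv"]) auto
  moreover have "integral {0..1} (\<lambda>x. u1 x * v1 x) = 0"
    using U(1) V(1) by (intro integral_product_eq_0_if_antiperiodic_and_alternating[OF n, of "{}"]) auto
  moreover have "integral {0..1} (\<lambda>x. u x * v x) = 0"
    using assms(4,5) by (intro integral_product_eq_0_if_antiperiodic_and_alternating[OF n, of "{}"]) auto
  ultimately show ?thesis
    by (simp add: ip_def)
qed

lemma ip_commute: "ip \<beta> \<gamma> u u1 u2 v v1 v2 = ip \<beta> \<gamma> v v1 v2 u u1 u2"
  by (simp add: ip_def mult.commute)

section \<open>The symmetry classes\<close>

lemma T_power_apply: "(T n ^^ k) v x = (-1) ^ k * v (x + real k / real n)"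
proof (induction k arbitrary: x)
  case (Suc k)
  have "(T n ^^ Suc k) v x = - (T n ^^ k) v (x + 1 / real n)"
    by (simp add: T_def)
  also have "\<dots> = - ((-1) ^ k * v (x + 1 / real n + real k / real n))"
    by (simp add: Suc.IH)
  also have "x + 1 / real n + real k / real n = x + real (Suc k) / real n"
    by (simp add: add_divide_distrib)
  finally show ?case
    by simp
qed simp

lemma W_a_shift:
  assumes "W_a n v"
  shows "v (x + real k / real n) = (-1) ^ k * v x"
proof -
  have "T n v = v"
    using assms unfolding W_a_def by auto
  then have "(T n ^^ k) v = v"
    by (induction k) auto
  then have "v x = (-1) ^ k * v (x + real k / real n)"
    by (metis T_power_apply)
  then show ?thesis
    by (simp add: power_mult_distrib[symmetric] flip: power_add mult.assoc)
qed

lemma W_b_alternating_sum: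
  assumes "W_b n v"
  shows "(\<Sum>k<n. (-1) ^ k * v (x + real k / real n)) = 0"
  using assms unfolding W_b_def T_power_apply by simp

lemma W_b_shift_1:
  assumes "n \<ge> 1" and "W_b n v"
  shows "v (x + 1) = (-1) ^ n * v x"
proof -
  define a where "a k = (-1) ^ k * v (x + real k / real n)" for k
  \<comment> \<open>The vanishing alternating sums at \<open>x\<close> and \<open>x + 1/n\<close> add up to a telescoping sum.\<close>
  have "a k - a (Suc k) = (-1) ^ k * v (x + real k / real n) + (-1) ^ k * v ((x + 1 / real n) + real k / real n)"
    for k
    by (simp add: a_def add_divide_distrib algebra_simps)
  then have "a 0 - a n = 0"
    using W_b_alternating_sum[OF assms(2), of x] W_b_alternating_sum[OF assms(2), of "x + 1 / real n"]
    by (simp add: sum_lessThan_telescope'[symmetric] sum.distrib)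
  then have "v x = (-1) ^ n * v (x + 1)"
    using assms(1) by (simp add: a_def)
  then show ?thesis
    by (simp flip: mult.assoc power_add)
qed

lemma W_c_shift_1:
  assumes "n \<ge> 1" and "W_c n v"
  shows "v (x + 1) = - ((-1) ^ n * v x)"
proof -
  have "(-1) ^ n * v (x + real n / real n) + v x = 0"
    using assms(2) unfolding W_c_def T_power_apply by blast
  then have shift: "(-1) ^ n * v (x + 1) = - v x"
    using assms(1) by simp
  have "v (x + 1) = ((-1) ^ n * (-1) ^ n) * v (x + 1)"
    by (simp flip: power_add)
  also have "\<dots> = - ((-1) ^ n * v x)"
    by (simp only: mult.assoc shift mult_minus_right)
  finally show ?thesis .
qed

definition reflection_sign :: "sym \<Rightarrow> nat \<Rightarrow> real" where
  "reflection_sign \<tau> n = (if \<tau> = Sc then - ((-1) ^ n) else (-1) ^ n)"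

lemma reflection_sign_squared: "reflection_sign \<tau> n * reflection_sign \<tau> n = 1"
  by (simp add: reflection_sign_def flip: power_add)

lemma W_sym_shift_1:
  assumes "n \<ge> 1" and "W_sym \<tau> n v"
  shows "v (x + 1) = reflection_sign \<tau> n * v x"
  using assms W_a_shift[of n v x n] W_b_shift_1 W_c_shift_1
  by (cases \<tau>) (auto simp: W_sym_def reflection_sign_def)

lemma ext_eq:
  assumes "x \<in> {0..1}"
  shows "ext u x = u x"
proof -
  have "\<lfloor>x / 2\<rfloor> = 0"
    using assms by (simp add: floor_eq_iff)
  then show ?thesis
    using assms by (simp add: ext_def Let_def)
qed

lemma ext_shift_1:
  assumes "x \<in> {0..1}"
  shows "ext u (x + 1) = u (1 - x)"
proof (cases "x = 1")
  case True
  have "\<lfloor>(1 + 1) / 2 :: real\<rfloor> = 1"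
    by simp
  then show ?thesis
    using True by (simp add: ext_def Let_def)
next
  case False
  then have "\<lfloor>(x + 1) / 2\<rfloor> = 0"
    using assms by (simp add: floor_eq_iff)
  then show ?thesis
    using assms by (auto simp: ext_def Let_def)
qed

lemma in_X_sym_H2_01: "in_X_sym \<tau> n u u1 u2 \<Longrightarrow> H2_01 u u1 u2"
  by (simp add: in_X_sym_def in_X_def)

lemma X_sym_reflection:
  assumes "n \<ge> 1" and "in_X_sym \<tau> n u u1 u2" and "x \<in> {0..1}"
  shows "u (1 - x) = reflection_sign \<tau> n * u x"
  using assms W_sym_shift_1[of n \<tau> "ext u" x] ext_eq[of x u] ext_shift_1[of x u]
  by (simp add: in_X_sym_def)

lemma X_a_shift:
  assumes "in_X_sym Sa n u u1 u2" and "x \<in> {0..1}" and "x + real k / real n \<in> {0..1}"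
  shows "u (x + real k / real n) = (-1) ^ k * u x"
  using assms W_a_shift[of n "ext u" x k] ext_eq
  by (simp add: in_X_sym_def W_sym_def)

lemma X_b_alternating_sum:
  assumes "in_X_sym Sb n v v1 v2" and "t \<in> {0..1 / real n}"
  shows "(\<Sum>k<n. (-1) ^ k * v (t + real k / real n)) = 0"
proof -
  have "(\<Sum>k<n. (-1) ^ k * v (t + real k / real n)) = (\<Sum>k<n. (-1) ^ k * ext v (t + real k / real n))"
    using assms(2) by (intro sum.cong refl) (simp add: ext_eq[OF shift_in_unit_interval])
  also have "\<dots> = 0"
    using assms(1) W_b_alternating_sum by (simp add: in_X_sym_def W_sym_def)
  finally show ?thesis .
qed

lemma ip_X_a_X_b_eq_0:
  assumes "n \<ge> 1" and "in_X_sym Sa n u u1 u2" and "in_X_sym Sb n v v1 v2"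
  shows "ip \<beta> \<gamma> u u1 u2 v v1 v2 = 0"
proof (rule ip_eq_0_if_antiperiodic_and_alternating[OF assms(1) in_X_sym_H2_01 in_X_sym_H2_01])
  show "in_X_sym Sa n u u1 u2" "in_X_sym Sb n v v1 v2"
    by (fact assms)+
  show "\<forall>t\<in>{0..1 / real n}. \<forall>j<n. u (t + real j / real n) = (-1) ^ j * u t"
    using assms(1) shift_in_unit_interval shift_in_unit_interval[of 0 n]
    by (auto intro!: X_a_shift[OF assms(2)])
  show "\<forall>t\<in>{0..1 / real n}. (\<Sum>j<n. (-1) ^ j * v (t + real j / real n)) = 0"
    using X_b_alternating_sum[OF assms(3)] by blast
qed

theorem lemma2p9:
  fixes n :: nat and \<beta> \<gamma> :: real and \<tau> \<sigma> :: sym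
    and u u1 u2 v v1 v2 :: "real \<Rightarrow> real"
  assumes "n \<ge> 1" and "\<beta> \<ge> 0" and "\<gamma> \<ge> 0"
    and "\<tau> \<noteq> \<sigma>"
    and "in_X_sym \<tau> n u u1 u2" and "in_X_sym \<sigma> n v v1 v2"
  shows "ip \<beta> \<gamma> u u1 u2 v v1 v2 = 0"
proof -
  \<comment> \<open>The signs of \<open>\<beta>\<close> and \<open>\<gamma>\<close> are irrelevant: each of the three products vanishes.\<close>
  consider "\<tau> = Sc \<or> \<sigma> = Sc" | "\<tau> = Sa" "\<sigma> = Sb" | "\<tau> = Sb" "\<sigma> = Sa"
    using \<open>\<tau> \<noteq> \<sigma>\<close> by (cases \<tau>; cases \<sigma>) auto
  then show ?thesis
  proof cases
    case 1
    with \<open>\<tau> \<noteq> \<sigma>\<close> have "reflection_sign \<sigma> n = - reflection_sign \<tau> n"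
      by (cases \<tau>; cases \<sigma>) (auto simp: reflection_sign_def)
    then show ?thesis
      using X_sym_reflection[OF assms(1,5)] X_sym_reflection[OF assms(1,6)]
      by (intro ip_eq_0_if_opposite_reflection_parity[OF in_X_sym_H2_01 in_X_sym_H2_01
            reflection_sign_squared, OF assms(5,6)]) auto
  next
    case 2
    then show ?thesis
      using ip_X_a_X_b_eq_0 assms(1,5,6) by simp
  next
    case 3
    then show ?thesis
      using ip_X_a_X_b_eq_0 assms(1,5,6) ip_commute by metis
  qed
qed

end
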